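(* For all $\varepsilon,\delta>0$ and all $k\in\mathbb N$ there exists $N=N(\delta,\varepsilon,k)$ such that: if $r>N$ and $A\subseteq\Lambda_k^r$ has $|A|\ge\delta|\Lambda_k^r|$, then for every $x\in\Lambda_k^r$ there are $a_1,a_2\in A$ with $a_1^{-1}a_2\in U_{r\varepsilon}(x)$.
   Context: $\Lambda_k=\{\lambda\in\mathbb C:\lambda^k=1\}$ is the multiplicative group of $k$-th roots of unity, and $\Lambda_k^r$ is its $r$-th Cartesian power with coordinatewise multiplication. Let $d_0$ be one half of Euclidean distance on $\Lambda_k$, and for $x,y\in\Lambda_k^r$ let $d(x,y)=\sum_{j=1}^r d_0(x_j,y_j)$. For $t\ge0$, $U_t(x)=\{y\in\Lambda_k^r:d(x,y)\le t\}$. *)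

theory Defs
  imports Complex_Main "HOL-Library.FuncSet"
begin

definition unit_roots :: "nat \<Rightarrow> complex set" where
  "unit_roots k = {z. z ^ k = 1}"

definition root_cube :: "nat \<Rightarrow> nat \<Rightarrow> (nat \<Rightarrow> complex) set" where
  "root_cube k r = PiE {..<r} (\<lambda>_. unit_roots k)"

definition d0 :: "complex \<Rightarrow> complex \<Rightarrow> real" where
  "d0 z w = cmod (z - w) / 2"

definition cube_dist :: "nat \<Rightarrow> (nat \<Rightarrow> complex) \<Rightarrow> (nat \<Rightarrow> complex) \<Rightarrow> real" where
  "cube_dist r x y = (\<Sum>j<r. d0 (x j) (y j))"

definition U_ball :: "nat \<Rightarrow> nat \<Rightarrow> real \<Rightarrow> (nat \<Rightarrow> complex) \<Rightarrow> (nat \<Rightarrow> complex) set" where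
  "U_ball k r t x = {y \<in> root_cube k r. cube_dist r x y \<le> t}"

definition cube_divl :: "nat \<Rightarrow> (nat \<Rightarrow> complex) \<Rightarrow> (nat \<Rightarrow> complex) \<Rightarrow> (nat \<Rightarrow> complex)" where
  "cube_divl r a b = restrict (\<lambda>j. inverse (a j) * b j) {..<r}"

end

theory Submission
  imports Defs
begin

text \<open>If no quotient \<open>a\<^sub>1\<^sup>-\<^sup>1 a\<^sub>2\<close> of elements of \<open>A\<close> lies within \<open>t = r\<epsilon>\<close> of \<open>x\<close>, then,
  since \<open>d\<^sub>0 \<le> 1\<close> on the unit circle, the translate \<open>xA\<close> is at Hamming distance more than \<open>t\<close>
  from \<open>A\<close>. The Hamming distance to \<open>A\<close> is 1-Lipschitz, so by the Efron--Stein inequality its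
  variance under the uniform measure on \<open>\<Lambda>\<^sub>k\<^sup>r\<close> is at most \<open>r\<close>; it vanishes on \<open>A\<close> and exceeds
  \<open>t\<close> on \<open>xA\<close>, both of density \<open>\<ge> \<delta>\<close>, so \<open>\<delta>\<^sup>2 t\<^sup>2 \<le> r\<close>, i.e. \<open>r \<le> 1 / (\<delta>\<epsilon>)\<^sup>2\<close>.\<close>

text \<open>\<open>card X\<^sup>2\<close> times the variance of \<open>F\<close> under the uniform distribution on \<open>X\<close>.\<close>
definition sum_var :: "'a set \<Rightarrow> ('a \<Rightarrow> real) \<Rightarrow> real" where
  "sum_var X F = real (card X) * (\<Sum>x\<in>X. (F x)\<^sup>2) - (\<Sum>x\<in>X. F x)\<^sup>2"

lemma sum_pairs_diff_sq_eq_sum_var: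
  "(\<Sum>x\<in>X. \<Sum>y\<in>X. (F x - F y)\<^sup>2) = 2 * sum_var X F"
proof -
  have "(\<Sum>x\<in>X. \<Sum>y\<in>X. (F x - F y)\<^sup>2) = (\<Sum>x\<in>X. \<Sum>y\<in>X. (F x)\<^sup>2 + (F y)\<^sup>2 - 2 * F x * F y)"
    by (intro sum.cong refl) (simp add: power2_eq_square algebra_simps)
  also have "\<dots> = 2 * sum_var X F"
    by (simp add: sum_var_def sum.distrib sum_subtractf sum_distrib_left sum_distrib_right
        power2_eq_square algebra_simps)
  finally show ?thesis .
qed

lemma sum_var_le_oscillation:
  assumes "\<And>x y. x \<in> X \<Longrightarrow> y \<in> X \<Longrightarrow> \<bar>F x - F y\<bar> \<le> c"
  shows "2 * sum_var X F \<le> (c * real (card X))\<^sup>2"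
proof -
  have "2 * sum_var X F = (\<Sum>x\<in>X. \<Sum>y\<in>X. (F x - F y)\<^sup>2)"
    by (simp add: sum_pairs_diff_sq_eq_sum_var)
  also have "\<dots> \<le> (\<Sum>x\<in>X. \<Sum>y\<in>X. c\<^sup>2)"
    using assms by (intro sum_mono) (metis abs_ge_zero power2_abs power_mono)
  also have "\<dots> = (c * real (card X))\<^sup>2"
    by (simp add: power2_eq_square)
  finally show ?thesis .
qed

lemma sum_PiE_insert:
  assumes "i \<notin> I"
  shows "(\<Sum>x\<in>PiE (insert i I) (\<lambda>_. S). F x) = (\<Sum>g\<in>PiE I (\<lambda>_. S). \<Sum>s\<in>S. F (g(i:=s)))"
proof -
  have "(\<Sum>x\<in>PiE (insert i I) (\<lambda>_. S). F x) = (\<Sum>(s, g)\<in>S \<times> PiE I (\<lambda>_. S). F (g(i := s)))"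
    unfolding PiE_insert_eq using inj_combinator[OF assms, of "\<lambda>_. S"]
    by (subst sum.reindex) (auto simp: case_prod_beta)
  also have "\<dots> = (\<Sum>g\<in>PiE I (\<lambda>_. S). \<Sum>s\<in>S. F (g(i:=s)))"
    by (simp add: sum.cartesian_product [symmetric] sum.swap [of _ S])
  finally show ?thesis .
qed

text \<open>The law of total variance, conditioning on all coordinates except \<open>i\<close>.\<close>
lemma sum_var_PiE_insert:
  assumes "i \<notin> I" "finite I"
  shows "sum_var (PiE (insert i I) (\<lambda>_. S)) f =
           real (card (PiE I (\<lambda>_. S))) * (\<Sum>g\<in>PiE I (\<lambda>_. S). sum_var S (\<lambda>s. f (g(i:=s))))
         + sum_var (PiE I (\<lambda>_. S)) (\<lambda>g. \<Sum>s\<in>S. f (g(i:=s)))"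
  using assms
  by (simp add: sum_var_def sum_PiE_insert card_PiE sum_subtractf sum_distrib_left algebra_simps)

definition hamming_lipschitz :: "'a set \<Rightarrow> 'i set \<Rightarrow> real \<Rightarrow> (('i \<Rightarrow> 'a) \<Rightarrow> real) \<Rightarrow> bool" where
  "hamming_lipschitz S I c f \<longleftrightarrow>
     (\<forall>x\<in>PiE I (\<lambda>_. S). \<forall>i\<in>I. \<forall>s\<in>S. \<bar>f x - f (x(i:=s))\<bar> \<le> c)"

lemma hamming_lipschitz_fiber_sum:
  assumes "i \<notin> I" and f: "hamming_lipschitz S (insert i I) c f"
  shows "hamming_lipschitz S I (c * real (card S)) (\<lambda>g. \<Sum>s\<in>S. f (g(i:=s)))"
  unfolding hamming_lipschitz_def
proof (intro ballI)
  fix g j t assume g: "g \<in> PiE I (\<lambda>_. S)" and j: "j \<in> I" and t: "t \<in> S"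
  have "i \<noteq> j" using assms j by auto
  then have "\<bar>(\<Sum>s\<in>S. f (g(i:=s))) - (\<Sum>s\<in>S. f ((g(j:=t))(i:=s)))\<bar>
               = \<bar>\<Sum>s\<in>S. f (g(i:=s)) - f ((g(i:=s))(j:=t))\<bar>"
    by (simp add: sum_subtractf fun_upd_twist)
  also have "\<dots> \<le> (\<Sum>s\<in>S. \<bar>f (g(i:=s)) - f ((g(i:=s))(j:=t))\<bar>)"
    by (rule sum_abs)
  also have "\<dots> \<le> (\<Sum>s\<in>S. c)"
  proof (intro sum_mono)
    fix s assume "s \<in> S"
    with g have "g(i:=s) \<in> PiE (insert i I) (\<lambda>_. S)"
      by (auto simp: PiE_def extensional_def)
    with f j t show "\<bar>f (g(i:=s)) - f ((g(i:=s))(j:=t))\<bar> \<le> c"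
      by (auto simp: hamming_lipschitz_def)
  qed
  finally show "\<bar>(\<Sum>s\<in>S. f (g(i:=s))) - (\<Sum>s\<in>S. f ((g(j:=t))(i:=s)))\<bar> \<le> c * real (card S)"
    by (simp add: mult.commute)
qed

lemma efron_stein:
  assumes "finite I" "hamming_lipschitz S I c f"
  shows "2 * sum_var (PiE I (\<lambda>_. S)) f \<le> real (card I) * (c * real (card (PiE I (\<lambda>_. S))))\<^sup>2"
  using assms
proof (induction I arbitrary: f c rule: finite_induct)
  case empty
  show ?case by (simp add: PiE_empty_domain sum_var_def)
next
  case (insert i I)
  define C where "C = PiE I (\<lambda>_. S)"
  define M where "M = real (card C)"
  define q where "q = real (card S)"
  have fiber: "2 * sum_var S (\<lambda>s. f (g(i:=s))) \<le> (c * q)\<^sup>2" if g: "g \<in> C" for g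
    unfolding q_def
  proof (rule sum_var_le_oscillation)
    fix s t assume s: "s \<in> S" and t: "t \<in> S"
    with g have "g(i:=s) \<in> PiE (insert i I) (\<lambda>_. S)"
      by (auto simp: C_def PiE_def extensional_def)
    with insert.prems t show "\<bar>f (g(i:=s)) - f (g(i:=t))\<bar> \<le> c"
      by (fastforce simp: hamming_lipschitz_def)
  qed
  have "M * (2 * (\<Sum>g\<in>C. sum_var S (\<lambda>s. f (g(i:=s))))) \<le> M * (M * (c * q)\<^sup>2)"
    using sum_mono[OF fiber] by (intro mult_left_mono) (auto simp: sum_distrib_left M_def)
  moreover have "2 * sum_var C (\<lambda>g. \<Sum>s\<in>S. f (g(i:=s))) \<le> real (card I) * (c * q * M)\<^sup>2"
    using insert.IH[OF hamming_lipschitz_fiber_sum[OF insert.hyps(2) insert.prems]]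
    unfolding C_def M_def q_def .
  ultimately have "2 * sum_var (PiE (insert i I) (\<lambda>_. S)) f
                    \<le> M * (M * (c * q)\<^sup>2) + real (card I) * (c * q * M)\<^sup>2"
    unfolding sum_var_PiE_insert[OF insert.hyps(2,1)] C_def[symmetric] M_def[symmetric]
    by (simp add: distrib_left)
  also have "\<dots> = real (card (insert i I)) * (c * real (card (PiE (insert i I) (\<lambda>_. S))))\<^sup>2"
    using insert.hyps by (simp add: card_PiE M_def C_def q_def power2_eq_square algebra_simps)
  finally show ?case .
qed

definition hamming_dist :: "'i set \<Rightarrow> ('i \<Rightarrow> 'a) \<Rightarrow> ('i \<Rightarrow> 'a) \<Rightarrow> nat" where
  "hamming_dist I x y = card {j\<in>I. x j \<noteq> y j}"

definition hamming_infdist :: "'i set \<Rightarrow> ('i \<Rightarrow> 'a) set \<Rightarrow> ('i \<Rightarrow> 'a) \<Rightarrow> nat" where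
  "hamming_infdist I A x = Min (hamming_dist I x ` A)"

lemma hamming_infdist_le:
  "finite A \<Longrightarrow> a \<in> A \<Longrightarrow> hamming_infdist I A x \<le> hamming_dist I x a"
  by (simp add: hamming_infdist_def)

lemma hamming_infdist_attained:
  assumes "finite A" "A \<noteq> {}"
  obtains a where "a \<in> A" "hamming_infdist I A x = hamming_dist I x a"
proof -
  have "hamming_infdist I A x \<in> hamming_dist I x ` A"
    unfolding hamming_infdist_def using assms by (intro Min_in) auto
  with that show ?thesis
    by blast
qed

lemma hamming_dist_le_fun_upd:
  assumes "finite I"
  shows "hamming_dist I x y \<le> hamming_dist I (x(i:=s)) y + 1"
proof -
  have "{j\<in>I. x j \<noteq> y j} \<subseteq> insert i {j\<in>I. (x(i:=s)) j \<noteq> y j}"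
    by auto
  then have "hamming_dist I x y \<le> card (insert i {j\<in>I. (x(i:=s)) j \<noteq> y j})"
    unfolding hamming_dist_def using assms by (intro card_mono) auto
  also have "\<dots> \<le> hamming_dist I (x(i:=s)) y + 1"
    unfolding hamming_dist_def using assms by (simp add: card_insert_if)
  finally show ?thesis .
qed

lemma hamming_infdist_le_fun_upd:
  assumes "finite I" "finite A" "A \<noteq> {}"
  shows "hamming_infdist I A x \<le> hamming_infdist I A (x(i:=s)) + 1"
proof -
  obtain a where a: "a \<in> A" "hamming_infdist I A (x(i:=s)) = hamming_dist I (x(i:=s)) a"
    using hamming_infdist_attained[OF assms(2,3)] .
  have "hamming_infdist I A x \<le> hamming_dist I x a"
    using hamming_infdist_le[OF assms(2) a(1)] .
  with a(2) hamming_dist_le_fun_upd[OF assms(1)] show ?thesis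
    by (metis add_le_mono1 order_trans)
qed

lemma hamming_lipschitz_infdist:
  assumes "finite I" "finite A" "A \<noteq> {}"
  shows "hamming_lipschitz S I 1 (\<lambda>x. real (hamming_infdist I A x))"
proof -
  have "\<bar>real (hamming_infdist I A x) - real (hamming_infdist I A (x(i:=s)))\<bar> \<le> 1" for x i s
    using hamming_infdist_le_fun_upd[OF assms, of x i s]
      hamming_infdist_le_fun_upd[OF assms, of "x(i:=s)" i "x i"]
    by simp
  then show ?thesis
    by (simp add: hamming_lipschitz_def)
qed

lemma card_mult_card_le_of_hamming_separated:
  assumes "finite I" "finite S" "A \<subseteq> PiE I (\<lambda>_. S)" "B \<subseteq> PiE I (\<lambda>_. S)" "t \<ge> 0"
    and sep: "\<And>a b. a \<in> A \<Longrightarrow> b \<in> B \<Longrightarrow> t < real (hamming_dist I b a)"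
  shows "real (card A) * real (card B) * t\<^sup>2 \<le> real (card I) * (real (card (PiE I (\<lambda>_. S))))\<^sup>2"
proof (cases "A = {}")
  case False
  define C where "C = PiE I (\<lambda>_. S)"
  have "finite C"
    using assms(1,2) by (simp add: C_def finite_PiE)
  then have "finite A" "finite B"
    using assms(3,4) finite_subset by (auto simp: C_def)
  define f where "f x = real (hamming_infdist I A x)" for x
  have f_A: "f a = 0" if "a \<in> A" for a
    using hamming_infdist_le[OF \<open>finite A\<close> that, of I a]
    by (simp add: f_def hamming_dist_def)
  have f_B: "t < f b" if "b \<in> B" for b
    using hamming_infdist_attained[OF \<open>finite A\<close> False, of I b] sep[OF _ that]
    by (metis f_def)
  have "real (card A) * real (card B) * t\<^sup>2 = (\<Sum>a\<in>A. \<Sum>b\<in>B. t\<^sup>2)"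
    by simp
  also have "\<dots> \<le> (\<Sum>a\<in>A. \<Sum>b\<in>B. (f a - f b)\<^sup>2)"
    using f_A f_B assms(5) by (intro sum_mono) (simp add: power_mono less_imp_le)
  also have "\<dots> \<le> (\<Sum>a\<in>A. \<Sum>b\<in>C. (f a - f b)\<^sup>2)"
    using \<open>finite C\<close> assms(4) by (intro sum_mono sum_mono2) (auto simp: C_def)
  also have "\<dots> \<le> (\<Sum>a\<in>C. \<Sum>b\<in>C. (f a - f b)\<^sup>2)"
    using \<open>finite C\<close> assms(3) by (intro sum_mono2 sum_nonneg) (auto simp: C_def)
  also have "\<dots> = 2 * sum_var C f"
    by (rule sum_pairs_diff_sq_eq_sum_var)
  also have "\<dots> \<le> real (card I) * (real (card C))\<^sup>2"
    using efron_stein[OF assms(1) hamming_lipschitz_infdist[OF assms(1) \<open>finite A\<close> False]]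
    by (simp add: C_def f_def [abs_def])
  finally show ?thesis
    by (simp add: C_def)
qed simp

lemma finite_unit_roots: "k \<ge> 1 \<Longrightarrow> finite (unit_roots k)"
  unfolding unit_roots_def by (rule finite_roots_unity)

lemma norm_unit_root:
  assumes "k \<ge> 1" "z \<in> unit_roots k"
  shows "cmod z = 1"
proof -
  have "cmod z ^ k = 1"
    using assms(2) by (simp add: unit_roots_def flip: norm_power)
  then show ?thesis
    using assms(1) power_eq_imp_eq_base[of "cmod z" k 1] by simp
qed

lemma unit_roots_mult: "z \<in> unit_roots k \<Longrightarrow> w \<in> unit_roots k \<Longrightarrow> z * w \<in> unit_roots k"
  by (simp add: unit_roots_def power_mult_distrib)

lemma unit_roots_inverse: "z \<in> unit_roots k \<Longrightarrow> inverse z \<in> unit_roots k"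
  by (simp add: unit_roots_def power_inverse)

lemma root_cube_memD: "a \<in> root_cube k r \<Longrightarrow> j < r \<Longrightarrow> a j \<in> unit_roots k"
  by (auto simp: root_cube_def)

lemma card_root_cube_pos: "k \<ge> 1 \<Longrightarrow> 0 < card (root_cube k r)"
proof -
  assume "k \<ge> 1"
  moreover have "1 \<in> unit_roots k"
    by (simp add: unit_roots_def)
  ultimately show ?thesis
    by (auto simp: root_cube_def card_PiE finite_unit_roots card_gt_0_iff)
qed

definition cube_mul :: "nat \<Rightarrow> (nat \<Rightarrow> complex) \<Rightarrow> (nat \<Rightarrow> complex) \<Rightarrow> (nat \<Rightarrow> complex)" where
  "cube_mul r x a = restrict (\<lambda>j. x j * a j) {..<r}"

lemma cube_mul_in_root_cube:
  "x \<in> root_cube k r \<Longrightarrow> a \<in> root_cube k r \<Longrightarrow> cube_mul r x a \<in> root_cube k r"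
  using root_cube_memD[of x k r] root_cube_memD[of a k r]
  by (auto simp: root_cube_def cube_mul_def intro: unit_roots_mult)

lemma cube_divl_in_root_cube:
  "a \<in> root_cube k r \<Longrightarrow> b \<in> root_cube k r \<Longrightarrow> cube_divl r a b \<in> root_cube k r"
  using root_cube_memD[of a k r] root_cube_memD[of b k r]
  by (auto simp: root_cube_def cube_divl_def intro: unit_roots_mult unit_roots_inverse)

lemma inj_on_cube_mul:
  assumes "k \<ge> 1" "x \<in> root_cube k r"
  shows "inj_on (cube_mul r x) (root_cube k r)"
proof (rule inj_onI)
  fix a b assume a: "a \<in> root_cube k r" and b: "b \<in> root_cube k r"
    and ab: "cube_mul r x a = cube_mul r x b"
  have "a j = b j" if "j < r" for j
  proof -
    have "x j * a j = x j * b j"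
      using fun_cong[OF ab, of j] that by (simp add: cube_mul_def)
    moreover have "x j \<noteq> 0"
      using norm_unit_root[OF assms(1)] assms(2) that by (fastforce simp: root_cube_def)
    ultimately show ?thesis
      by simp
  qed
  with a b show "a = b"
    by (auto simp: root_cube_def intro: PiE_ext)
qed

text \<open>Where \<open>x a\<^sub>1\<close> and \<open>a\<^sub>2\<close> agree, \<open>a\<^sub>1\<^sup>-\<^sup>1 a\<^sub>2\<close> agrees with \<open>x\<close>; elsewhere \<open>d\<^sub>0 \<le> 1\<close>
  on the unit circle.\<close>
lemma cube_dist_divl_le_hamming_dist:
  assumes "k \<ge> 1" "x \<in> root_cube k r" "a1 \<in> root_cube k r" "a2 \<in> root_cube k r"
  shows "cube_dist r x (cube_divl r a1 a2) \<le> real (hamming_dist {..<r} (cube_mul r x a1) a2)"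
proof -
  have "d0 (x j) (inverse (a1 j) * a2 j) \<le> of_bool (x j * a1 j \<noteq> a2 j)" if "j < r" for j
  proof -
    have norms: "cmod (x j) = 1" "cmod (a1 j) = 1" "cmod (a2 j) = 1"
      using assms that norm_unit_root[OF assms(1)] by (auto simp: root_cube_def)
    show ?thesis
    proof (cases "x j * a1 j = a2 j")
      case True
      moreover have "a1 j \<noteq> 0"
        using norms by auto
      ultimately show ?thesis
        by (simp add: d0_def field_simps)
    next
      case False
      have "cmod (x j - inverse (a1 j) * a2 j) \<le> cmod (x j) + cmod (inverse (a1 j) * a2 j)"
        by (rule norm_triangle_ineq4)
      with False norms show ?thesis
        by (simp add: d0_def norm_mult norm_inverse)
    qed
  qed
  then have "cube_dist r x (cube_divl r a1 a2) \<le> (\<Sum>j<r. of_bool (cube_mul r x a1 j \<noteq> a2 j))"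
    unfolding cube_dist_def by (intro sum_mono) (simp add: cube_divl_def cube_mul_def)
  also have "\<dots> = real (hamming_dist {..<r} (cube_mul r x a1) a2)"
    by (simp add: hamming_dist_def Int_def)
  finally show ?thesis .
qed

lemma card_le_of_no_divl_in_U_ball:
  assumes "k \<ge> 1" "A \<subseteq> root_cube k r" "x \<in> root_cube k r" "t \<ge> 0"
    and no_pair: "\<And>a1 a2. a1 \<in> A \<Longrightarrow> a2 \<in> A \<Longrightarrow> cube_divl r a1 a2 \<notin> U_ball k r t x"
  shows "(real (card A))\<^sup>2 * t\<^sup>2 \<le> real r * (real (card (root_cube k r)))\<^sup>2"
proof -
  define B where "B = cube_mul r x ` A"
  have "card B = card A"
    unfolding B_def using inj_on_cube_mul[OF assms(1,3)] assms(2)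
    by (intro card_image) (rule inj_on_subset)
  have B: "B \<subseteq> root_cube k r"
    using assms(2,3) cube_mul_in_root_cube by (auto simp: B_def)
  have "t < real (hamming_dist {..<r} b a2)" if "a2 \<in> A" "b \<in> B" for a2 b
  proof -
    obtain a1 where a1: "a1 \<in> A" "b = cube_mul r x a1"
      using \<open>b \<in> B\<close> by (auto simp: B_def)
    have "t < cube_dist r x (cube_divl r a1 a2)"
      using no_pair[OF a1(1) that(1)] cube_divl_in_root_cube assms(2) a1(1) that(1)
      by (fastforce simp: U_ball_def)
    also have "\<dots> \<le> real (hamming_dist {..<r} b a2)"
      using cube_dist_divl_le_hamming_dist assms(1,2,3) a1 that(1) by blast
    finally show ?thesis .
  qed
  then have "real (card A) * real (card B) * t\<^sup>2 \<le> real (card {..<r}) * (real (card (root_cube k r)))\<^sup>2"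
    using card_mult_card_le_of_hamming_separated[of "{..<r}" "unit_roots k" A B t] assms B
      finite_unit_roots
    by (auto simp: root_cube_def)
  then show ?thesis
    by (simp add: \<open>card B = card A\<close> power2_eq_square)
qed

lemma sq_mult_le_of_dense_without_divl_in_U_ball:
  assumes "k \<ge> 1" "A \<subseteq> root_cube k r" "\<delta> \<ge> 0"
    and dense: "\<delta> * real (card (root_cube k r)) \<le> real (card A)"
    and "x \<in> root_cube k r" "t \<ge> 0"
    and "\<And>a1 a2. a1 \<in> A \<Longrightarrow> a2 \<in> A \<Longrightarrow> cube_divl r a1 a2 \<notin> U_ball k r t x"
  shows "(\<delta> * t)\<^sup>2 \<le> real r"
proof -
  define M where "M = real (card (root_cube k r))"
  have "M > 0"
    using card_root_cube_pos[OF assms(1)] by (simp add: M_def)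
  have "(\<delta> * t)\<^sup>2 * M\<^sup>2 = (\<delta> * M)\<^sup>2 * t\<^sup>2"
    by (simp add: power_mult_distrib)
  also have "\<dots> \<le> (real (card A))\<^sup>2 * t\<^sup>2"
    using dense assms(3) \<open>M > 0\<close> by (intro mult_right_mono power_mono) (auto simp: M_def)
  also have "\<dots> \<le> real r * M\<^sup>2"
    unfolding M_def by (rule card_le_of_no_divl_in_U_ball) (use assms in auto)
  finally show ?thesis
    using \<open>M > 0\<close> by simp
qed

theorem lemma6p3:
  fixes \<epsilon> \<delta> :: real and k :: nat
  assumes "\<epsilon> > 0" and "\<delta> > 0" and "k \<ge> 1"
  shows "\<exists>N::nat. \<forall>r::nat. r > N \<longrightarrow>
           (\<forall>A. A \<subseteq> root_cube k r \<and> real (card A) \<ge> \<delta> * real (card (root_cube k r)) \<longrightarrow>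
             (\<forall>x \<in> root_cube k r. \<exists>a1 \<in> A. \<exists>a2 \<in> A.
                cube_divl r a1 a2 \<in> U_ball k r (real r * \<epsilon>) x))"
proof (intro exI allI impI ballI)
  fix r :: nat and A x
  assume r: "r > nat \<lceil>1 / (\<delta> * \<epsilon>)\<^sup>2\<rceil>"
    and A: "A \<subseteq> root_cube k r \<and> real (card A) \<ge> \<delta> * real (card (root_cube k r))"
    and x: "x \<in> root_cube k r"
  show "\<exists>a1\<in>A. \<exists>a2\<in>A. cube_divl r a1 a2 \<in> U_ball k r (real r * \<epsilon>) x"
  proof (rule ccontr)
    assume "\<not> ?thesis"
    then have "(\<delta> * \<epsilon>)\<^sup>2 * real r * real r \<le> 1 * real r"
      using sq_mult_le_of_dense_without_divl_in_U_ball[OF assms(3) _ _ _ x, of A \<delta> "real r * \<epsilon>"]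
        A assms(1,2) by (simp add: power_mult_distrib power2_eq_square mult_ac)
    then have "(\<delta> * \<epsilon>)\<^sup>2 * real r \<le> 1"
      using r by (simp add: mult_le_cancel_right_pos)
    moreover have "1 / (\<delta> * \<epsilon>)\<^sup>2 < real r"
      using real_nat_ceiling_ge[of "1 / (\<delta> * \<epsilon>)\<^sup>2"] r by linarith
    ultimately show False
      using assms(1,2) by (simp add: divide_less_eq mult.commute)
  qed
qed

end
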